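(* Let $N>0$ be real and $n\ge0$ an integer. Let $X$ be a real random variable whose probability density is proportional to \[ f_{n,N}(X)=\left(1+\frac{X^2}{N}\right)^{-(N+1+n)}\bigl(H_n^N(X)\bigr)^2,\qquad X\in\mathbb{R}. \] Then the random variable \[ Y=\frac{X/\sqrt{N}}{\sqrt{1+\frac{X^{2}}{N}}} \] has, on $(-1,1)$, a probability density proportional to \[ g_{n,\nu}(Y)=(1-Y^2)^{\nu-\frac12}\bigl(C_n^{\nu}(Y)\bigr)^2\quad\text{with }\nu=N. \]
   Context: For $N>0$ and integer $n\ge0$, the relativistic Hermite polynomial is $H_n^N(X)=(-1)^n(1+\frac{X^2}{N})^{N+n}\frac{d^n}{dX^n}(1+\frac{X^2}{N})^{-N}$. For $\nu\neq0$, the Gegenbauer polynomial is $C_n^{\nu}(X)=\alpha_{n,\nu}(-1)^n(1-X^2)^{\frac12-\nu}\frac{d^n}{dX^n}(1-X^2)^{n+\nu-\frac12}$ with $\alpha_{n,\nu}=\frac{(2\nu)_n}{2^n n!(\nu+\frac12)_n}$, $(a)_n$ the Pochhammer symbol. Equivalently $f_{n,N}=|h_n^N|^2$ with $h_n^N(X)=(1+\frac{X^2}{N})^{-\frac{N+1+n}{2}}H_n^N(X)$ and $g_{n,\nu}=|\mathfrak{c}_n^{\nu}|^2$ with $\mathfrak{c}_n^{\nu}(Y)=(1-Y^2)^{\frac{\nu}{2}-\frac14}C_n^{\nu}(Y)$. *)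

theory Defs
  imports "HOL-Probability.Probability"
begin

definition rel_hermite :: "real \<Rightarrow> nat \<Rightarrow> real \<Rightarrow> real" where
  "rel_hermite N n x =
     (-1) ^ n * (1 + x\<^sup>2 / N) powr (N + real n) *
     (deriv ^^ n) (\<lambda>t. (1 + t\<^sup>2 / N) powr (- N)) x"

definition gegenbauer_alpha :: "real \<Rightarrow> nat \<Rightarrow> real" where
  "gegenbauer_alpha \<nu> n =
     pochhammer (2 * \<nu>) n / (2 ^ n * fact n * pochhammer (\<nu> + 1/2) n)"

definition gegenbauer :: "real \<Rightarrow> nat \<Rightarrow> real \<Rightarrow> real" where
  "gegenbauer \<nu> n x =
     gegenbauer_alpha \<nu> n * (-1) ^ n * (1 - x\<^sup>2) powr (1/2 - \<nu>) *
     (deriv ^^ n) (\<lambda>t. (1 - t\<^sup>2) powr (real n + \<nu> - 1/2)) x"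

definition f_rel :: "nat \<Rightarrow> real \<Rightarrow> real \<Rightarrow> real" where
  "f_rel n N x = (1 + x\<^sup>2 / N) powr (- (N + 1 + real n)) * (rel_hermite N n x)\<^sup>2"

definition g_geg :: "nat \<Rightarrow> real \<Rightarrow> real \<Rightarrow> real" where
  "g_geg n \<nu> y = (1 - y\<^sup>2) powr (\<nu> - 1/2) * (gegenbauer \<nu> n y)\<^sup>2"

end

theory Submission
  imports Defs "HOL-Computational_Algebra.Polynomial"
begin

text \<open>Put \<open>P = 1 + x^2/N\<close> and \<open>y = (x/\<surd>N)/\<surd>P\<close>, so that \<open>1 - y^2 = 1/P\<close> and
  \<open>dy/dx = P^(-3/2)/\<surd>N\<close>. The Gegenbauer Rodrigues derivative has the form
  \<open>(d/dy)^n (1 - y^2)^(n+N-1/2) = q\<^sub>n(y) (1 - y^2)^(N-1/2)\<close> for a polynomial \<open>q\<^sub>n\<close>, and a raising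
  identity for \<open>q\<^sub>n\<close> shows inductively that \<open>(d/dx)^k P^(-N)\<close> is a constant multiple of
  \<open>P^(-N-k/2) q\<^sub>k(y)\<close>. Hence \<open>H\<^sub>n\<^sup>N(x)\<close> is a constant multiple of \<open>P^(n/2) C\<^sub>n\<^sup>N(y)\<close>, so
  \<open>f\<^sub>n\<^sub>,\<^sub>N(x)\<close> is a constant multiple of \<open>g\<^sub>n\<^sub>,\<^sub>N(y) dy/dx\<close>, and the substitution rule for the
  increasing bijection \<open>x \<mapsto> y\<close> of \<open>\<real>\<close> onto \<open>(-1, 1)\<close> transports the density.\<close>

section \<open>Densities under increasing changes of variables\<close>

lemma range_eq_UN_image_interval:
  fixes g :: "real \<Rightarrow> real"
  assumes "mono g" "continuous_on UNIV g"
  shows "range g = (\<Union>m::nat. {g (- real m)..g (real m)})"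
proof (intro equalityI subsetI)
  fix y assume "y \<in> range g"
  then obtain z where z: "y = g z" by blast
  obtain m :: nat where "\<bar>z\<bar> \<le> real m" using real_arch_simple by blast
  then have "- real m \<le> z" "z \<le> real m" by auto
  then have "g (- real m) \<le> y" "y \<le> g (real m)"
    unfolding z by (simp_all add: monoD[OF assms(1)])
  then show "y \<in> (\<Union>m. {g (- real m)..g (real m)})" by (intro UN_I[of m]) auto
next
  fix y assume "y \<in> (\<Union>m::nat. {g (- real m)..g (real m)})"
  then obtain m :: nat where m: "g (- real m) \<le> y" "y \<le> g (real m)" by auto
  have "- real m \<le> real m" by simp
  from IVT'[OF m this continuous_on_subset[OF assms(2)]]
  obtain x where "g x = y" by blast
  then show "y \<in> range g" by blast
qed

lemma incseq_image_interval:
  fixes g :: "real \<Rightarrow> real"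
  assumes "mono g"
  shows "incseq (\<lambda>m::nat. {g (- real m)..g (real m)})"
proof (rule incseq_SucI)
  show "{g (- real m)..g (real m)} \<subseteq> {g (- real (Suc m))..g (real (Suc m))}" for m
    using monoD[OF assms, of "- real (Suc m)" "- real m"] monoD[OF assms, of "real m" "real (Suc m)"]
    by auto
qed

lemma nn_integral_substitution_range:
  fixes f g g' :: "real \<Rightarrow> real"
  assumes f[measurable]: "f \<in> borel_measurable borel"
    and g: "\<And>x. (g has_real_derivative g' x) (at x)"
    and g'_cont: "continuous_on UNIV g'"
    and g'_nonneg: "\<And>x. 0 \<le> g' x"
  shows "(\<integral>\<^sup>+y. ennreal (f y) * indicator (range g) y \<partial>lborel) = (\<integral>\<^sup>+x. ennreal (f (g x) * g' x) \<partial>lborel)"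
proof -
  have "mono g"
    unfolding mono_def using DERIV_nonneg_imp_nondecreasing g g'_nonneg by blast
  moreover have g_cont: "continuous_on UNIV g"
    using g by (rule has_real_derivative_imp_continuous_on)
  ultimately have range: "range g = (\<Union>m::nat. {g (- real m)..g (real m)})"
    by (rule range_eq_UN_image_interval)
  have g_meas[measurable]: "g \<in> borel_measurable borel" "g' \<in> borel_measurable borel"
    using g_cont g'_cont by (auto intro: borel_measurable_continuous_onI)
  define D1 where "D1 = density lborel (\<lambda>y. ennreal (f y))"
  define D2 where "D2 = density lborel (\<lambda>x. ennreal (f (g x) * g' x))"
  have step: "emeasure D1 {g (- real m)..g (real m)} = emeasure D2 {- real m..real m}" for m :: nat
  proof -
    have "emeasure D1 {g (- real m)..g (real m)}
        = (\<integral>\<^sup>+y. ennreal (f y) * indicator {g (- real m)..g (real m)} y \<partial>lborel)"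
      unfolding D1_def by (rule emeasure_density) auto
    also have "\<dots> = (\<integral>\<^sup>+y. ennreal (f y * indicator {g (- real m)..g (real m)} y) \<partial>lborel)"
      by (intro nn_integral_cong) (auto split: split_indicator)
    also have "\<dots> = (\<integral>\<^sup>+x. ennreal (f (g x) * g' x * indicator {- real m..real m} x) \<partial>lborel)"
      by (rule nn_integral_substitution)
         (auto simp: set_borel_measurable_def intro: g continuous_on_subset[OF g'_cont] g'_nonneg)
    also have "\<dots> = (\<integral>\<^sup>+x. ennreal (f (g x) * g' x) * indicator {- real m..real m} x \<partial>lborel)"
      by (intro nn_integral_cong) (auto split: split_indicator)
    also have "\<dots> = emeasure D2 {- real m..real m}"
      unfolding D2_def by (rule emeasure_density[symmetric]) auto
    finally show ?thesis .
  qed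
  have univ: "(\<Union>m::nat. {- real m..real m}) = UNIV"
    using range_eq_UN_image_interval[of "\<lambda>x. x"] by (simp add: mono_def)
  have "emeasure D1 (range g) = (SUP m. emeasure D1 {g (- real m)..g (real m)})"
    unfolding range using incseq_image_interval[OF \<open>mono g\<close>]
    by (intro SUP_emeasure_incseq[symmetric]) (auto simp: D1_def)
  also have "\<dots> = (SUP m. emeasure D2 {- real m..real m})"
    by (simp add: step)
  also have "\<dots> = emeasure D2 UNIV"
    unfolding univ[symmetric] using incseq_image_interval[of "\<lambda>x. x"]
    by (intro SUP_emeasure_incseq) (auto simp: D2_def mono_def)
  finally have "emeasure D1 (range g) = emeasure D2 UNIV" .
  moreover have "emeasure D1 (range g) = (\<integral>\<^sup>+y. ennreal (f y) * indicator (range g) y \<partial>lborel)"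
    unfolding D1_def range by (rule emeasure_density) auto
  moreover have "emeasure D2 UNIV = (\<integral>\<^sup>+x. ennreal (f (g x) * g' x) \<partial>lborel)"
    unfolding D2_def by (subst emeasure_density) auto
  ultimately show ?thesis by simp
qed

lemma distributed_increasing_transform:
  fixes X :: "'a \<Rightarrow> real" and f g g' k :: "real \<Rightarrow> real"
  assumes X: "distributed M lborel X (\<lambda>x. ennreal (f x))"
    and g: "\<And>x. (g has_real_derivative g' x) (at x)"
    and g'_cont: "continuous_on UNIV g'"
    and g'_nonneg: "\<And>x. 0 \<le> g' x"
    and k[measurable]: "k \<in> borel_measurable borel"
    and f_eq: "\<And>x. f x = k (g x) * g' x"
  shows "distributed M lborel (\<lambda>\<omega>. g (X \<omega>)) (\<lambda>y. ennreal (indicator (range g) y * k y))"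
proof -
  have g_cont: "continuous_on UNIV g"
    using g by (rule has_real_derivative_imp_continuous_on)
  have "mono g"
    unfolding mono_def using DERIV_nonneg_imp_nondecreasing g g'_nonneg by blast
  have [measurable]: "range g \<in> sets borel"
    unfolding range_eq_UN_image_interval[OF \<open>mono g\<close> g_cont] by auto
  have [measurable]: "g \<in> borel_measurable borel"
    using g_cont by (rule borel_measurable_continuous_onI)
  have distr_X: "distr M lborel X = density lborel (\<lambda>x. ennreal (f x))"
    and [measurable]: "X \<in> borel_measurable M" "(\<lambda>x. ennreal (f x)) \<in> borel_measurable borel"
    using X by (auto simp: distributed_def)
  define K where "K y = ennreal (indicator (range g) y * k y)" for y
  have "distr M lborel (\<lambda>\<omega>. g (X \<omega>)) = distr (distr M lborel X) lborel g"
    by (subst distr_distr) (auto simp: o_def)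
  also have "\<dots> = density lborel K"
  proof (rule measure_eqI)
    fix A assume "A \<in> sets (distr (distr M lborel X) lborel g)"
    then have [measurable]: "A \<in> sets borel" by simp
    have "emeasure (distr (distr M lborel X) lborel g) A
        = (\<integral>\<^sup>+x. ennreal (f x) * indicator (g -` A) x \<partial>lborel)"
      unfolding distr_X by (subst emeasure_distr) (auto intro!: emeasure_density measurable_sets_borel[of g borel])
    also have "\<dots> = (\<integral>\<^sup>+x. ennreal (k (g x) * indicator A (g x) * g' x) \<partial>lborel)"
      by (intro nn_integral_cong) (auto simp: f_eq split: split_indicator)
    also have "\<dots> = (\<integral>\<^sup>+y. ennreal (k y * indicator A y) * indicator (range g) y \<partial>lborel)"
      by (rule nn_integral_substitution_range[OF _ g g'_cont g'_nonneg, symmetric]) simp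
    also have "\<dots> = emeasure (density lborel K) A"
      unfolding K_def by (subst emeasure_density) (auto intro!: nn_integral_cong split: split_indicator)
    finally show "emeasure (distr (distr M lborel X) lborel g) A = emeasure (density lborel K) A" .
  qed simp
  finally show ?thesis
    unfolding distributed_def K_def by simp
qed

definition higher_derivs_on :: "(real \<Rightarrow> real) \<Rightarrow> real set \<Rightarrow> (nat \<Rightarrow> real \<Rightarrow> real) \<Rightarrow> bool" where
  "higher_derivs_on f S F \<longleftrightarrow>
     (\<forall>x\<in>S. F 0 x = f x) \<and> (\<forall>k. \<forall>x\<in>S. (F k has_real_derivative F (Suc k) x) (at x))"

lemma higher_derivs_on_funpow_deriv:
  assumes "open S" "higher_derivs_on f S F" "x \<in> S"
  shows "(deriv ^^ k) f x = F k x"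
  using assms(3)
proof (induction k arbitrary: x)
  case 0
  then show ?case using assms(2) by (simp add: higher_derivs_on_def)
next
  case (Suc k)
  have "((deriv ^^ k) f has_real_derivative F (Suc k) x) (at x)"
    by (rule has_field_derivative_transform_within_open[of "F k" _ _ S])
       (use assms Suc in \<open>auto simp: higher_derivs_on_def\<close>)
  then show ?case by (simp add: DERIV_imp_deriv)
qed

lemma higher_derivs_on_unique:
  assumes "open S" "higher_derivs_on f S F" "higher_derivs_on f S G" "x \<in> S"
  shows "F k x = G k x"
  using higher_derivs_on_funpow_deriv[OF assms(1,2,4)] higher_derivs_on_funpow_deriv[OF assms(1,3,4)]
  by simp

lemma higher_derivs_on_cong:
  "higher_derivs_on f S F \<Longrightarrow> (\<And>x. x \<in> S \<Longrightarrow> g x = f x) \<Longrightarrow> higher_derivs_on g S F"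
  by (simp add: higher_derivs_on_def)

lemma higher_derivs_on_Suc: "higher_derivs_on f S F \<Longrightarrow> higher_derivs_on (F 1) S (\<lambda>k. F (Suc k))"
  by (simp add: higher_derivs_on_def)

lemma higher_derivs_on_cmult:
  "higher_derivs_on f S F \<Longrightarrow> higher_derivs_on (\<lambda>x. c * f x) S (\<lambda>k x. c * F k x)"
  by (auto simp: higher_derivs_on_def intro!: derivative_eq_intros)

text \<open>Leibniz's rule for the factors \<open>x\<close> and \<open>1 - x\<^sup>2\<close>; the terms with \<open>F (k - 1)\<close>
  and \<open>F (k - 2)\<close> carry a vanishing coefficient whenever the truncated subtraction bites.\<close>

lemma higher_derivs_on_mult_ident:
  assumes "higher_derivs_on f S F"
  shows "higher_derivs_on (\<lambda>x. x * f x) S (\<lambda>k x. x * F k x + real k * F (k - 1) x)"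
  unfolding higher_derivs_on_def
proof (intro conjI ballI allI)
  fix x assume "x \<in> S"
  then show "x * F 0 x + real 0 * F (0 - 1) x = x * f x"
    using assms by (simp add: higher_derivs_on_def)
next
  fix k x assume "x \<in> S"
  then have F': "\<And>j. (F j has_real_derivative F (Suc j) x) (at x)"
    using assms by (simp add: higher_derivs_on_def)
  show "((\<lambda>x. x * F k x + real k * F (k - 1) x) has_real_derivative
          x * F (Suc k) x + real (Suc k) * F (Suc k - 1) x) (at x)"
    by (cases k) (auto intro!: derivative_eq_intros F' simp: algebra_simps)
qed

lemma higher_derivs_on_mult_one_minus_sq:
  assumes "higher_derivs_on f S F"
  shows "higher_derivs_on (\<lambda>x. (1 - x\<^sup>2) * f x) S
     (\<lambda>k x. (1 - x\<^sup>2) * F k x - 2 * real k * x * F (k - 1) x - real k * (real k - 1) * F (k - 2) x)"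
  unfolding higher_derivs_on_def
proof (intro conjI ballI allI)
  fix x assume "x \<in> S"
  then show "(1 - x\<^sup>2) * F 0 x - 2 * real 0 * x * F (0 - 1) x - real 0 * (real 0 - 1) * F (0 - 2) x
      = (1 - x\<^sup>2) * f x"
    using assms by (simp add: higher_derivs_on_def)
next
  fix k x assume "x \<in> S"
  then have F': "\<And>j. (F j has_real_derivative F (Suc j) x) (at x)"
    using assms by (simp add: higher_derivs_on_def)
  show "((\<lambda>x. (1 - x\<^sup>2) * F k x - 2 * real k * x * F (k - 1) x - real k * (real k - 1) * F (k - 2) x)
      has_real_derivative (1 - x\<^sup>2) * F (Suc k) x - 2 * real (Suc k) * x * F (Suc k - 1) x
        - real (Suc k) * (real (Suc k) - 1) * F (Suc k - 2) x) (at x)"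
    by (cases k; cases "k - 1"; auto intro!: derivative_eq_intros F' simp: algebra_simps power2_eq_square)
qed

section \<open>The Rodrigues formula for Gegenbauer polynomials\<close>

primrec rodrigues_poly :: "real \<Rightarrow> nat \<Rightarrow> real poly" where
  "rodrigues_poly s 0 = 1"
| "rodrigues_poly s (Suc k) =
     [:1, 0, -1:] * pderiv (rodrigues_poly s k) - smult (2 * (s - real k)) ([:0, 1:] * rodrigues_poly s k)"

lemma one_minus_sq_pos: "y \<in> {-1<..<1} \<Longrightarrow> 0 < 1 - (y::real)\<^sup>2"
  by (simp add: abs_square_less_1 abs_less_iff)

lemma higher_derivs_on_one_minus_sq_powr:
  "higher_derivs_on (\<lambda>t. (1 - t\<^sup>2) powr s) {-1<..<1}
     (\<lambda>k t. poly (rodrigues_poly s k) t * (1 - t\<^sup>2) powr (s - real k))"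
  unfolding higher_derivs_on_def
proof (intro conjI ballI allI)
  fix k and y :: real assume "y \<in> {-1<..<1}"
  then have pos: "1 - y\<^sup>2 > 0" by (rule one_minus_sq_pos)
  have split: "(1 - y\<^sup>2) powr (s - real k) = (1 - y\<^sup>2) * (1 - y\<^sup>2) powr (s - real k - 1)"
    using pos by (simp add: powr_mult_base)
  have "((\<lambda>t. poly (rodrigues_poly s k) t * (1 - t\<^sup>2) powr (s - real k)) has_real_derivative
      poly (pderiv (rodrigues_poly s k)) y * (1 - y\<^sup>2) powr (s - real k)
      + poly (rodrigues_poly s k) y * ((s - real k) * (1 - y\<^sup>2) powr (s - real k - 1) * - (2 * y))) (at y)"
    using pos by (auto intro!: derivative_eq_intros)
  moreover have "poly (pderiv (rodrigues_poly s k)) y * (1 - y\<^sup>2) powr (s - real k)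
      + poly (rodrigues_poly s k) y * ((s - real k) * (1 - y\<^sup>2) powr (s - real k - 1) * - (2 * y))
      = poly (rodrigues_poly s (Suc k)) y * (1 - y\<^sup>2) powr (s - real k - 1)"
    unfolding split by (simp add: algebra_simps power2_eq_square)
  moreover have "s - real (Suc k) = s - real k - 1"
    by simp
  ultimately show "((\<lambda>t. poly (rodrigues_poly s k) t * (1 - t\<^sup>2) powr (s - real k)) has_real_derivative
      poly (rodrigues_poly s (Suc k)) y * (1 - y\<^sup>2) powr (s - real (Suc k))) (at y)"
    by (simp only:)
qed simp

text \<open>Compute the higher derivatives of \<open>x (1 - x^2)^s = -(d/dx)(1 - x^2)^(s+1) / (2 (s + 1))\<close>
  and of \<open>(1 - x^2) (1 - x^2)^s = (1 - x^2)^(s+1)\<close> once by Leibniz's rule and once directly.\<close>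

lemma rodrigues_poly_shift:
  assumes s: "s \<noteq> -1" and y: "y \<in> {-1<..<1}"
  shows "poly (rodrigues_poly s (Suc n)) y - real (Suc n) * y * poly (rodrigues_poly s n) y
       = (1 - real (Suc n) / (2 * (s + 1))) * poly (rodrigues_poly (s + 1) (Suc n)) y"
proof -
  let ?S = "{-1<..<1::real}"
  define D where "D = (\<lambda>s k t. poly (rodrigues_poly s k) t * (1 - t\<^sup>2) powr (s - real k))"
  have D: "higher_derivs_on (\<lambda>t. (1 - t\<^sup>2) powr s) ?S (D s)" for s
    unfolding D_def by (rule higher_derivs_on_one_minus_sq_powr)
  have pos: "1 - y\<^sup>2 > 0" using y by (rule one_minus_sq_pos)
  have "higher_derivs_on (\<lambda>x. x * (1 - x\<^sup>2) powr s) ?S (\<lambda>k x. -1 / (2 * (s + 1)) * D (s + 1) (Suc k) x)"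
  proof (rule higher_derivs_on_cong[OF higher_derivs_on_cmult[OF higher_derivs_on_Suc[OF D]]])
    show "x * (1 - x\<^sup>2) powr s = -1 / (2 * (s + 1)) * D (s + 1) 1 x" for x
      using s by (simp add: D_def field_simps)
  qed
  from higher_derivs_on_unique[OF _ higher_derivs_on_mult_ident[OF D] this y, of n]
  have first: "y * D s n y + real n * D s (n - 1) y = -1 / (2 * (s + 1)) * D (s + 1) (Suc n) y"
    by simp
  have "higher_derivs_on (\<lambda>x. (1 - x\<^sup>2) * (1 - x\<^sup>2) powr s) ?S (D (s + 1))"
  proof (rule higher_derivs_on_cong[OF D])
    show "x \<in> ?S \<Longrightarrow> (1 - x\<^sup>2) * (1 - x\<^sup>2) powr s = (1 - x\<^sup>2) powr (s + 1)" for x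
      using one_minus_sq_pos[of x] by (simp add: powr_mult_base add.commute)
  qed
  from higher_derivs_on_unique[OF _ higher_derivs_on_mult_one_minus_sq[OF D] this y, of "Suc n"]
  have second: "(1 - y\<^sup>2) * D s (Suc n) y - 2 * real (Suc n) * y * D s n y
      - real (Suc n) * real n * D s (n - 1) y = D (s + 1) (Suc n) y"
    by simp
  have "(1 - y\<^sup>2) * D s (Suc n) y - real (Suc n) * y * D s n y
      = D (s + 1) (Suc n) y + real (Suc n) * (y * D s n y + real n * D s (n - 1) y)"
    using second by (simp add: algebra_simps)
  also have "\<dots> = (1 - real (Suc n) / (2 * (s + 1))) * D (s + 1) (Suc n) y"
    unfolding first using s by (simp add: field_simps)
  finally have "(1 - y\<^sup>2) * D s (Suc n) y - real (Suc n) * y * D s n y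
      = (1 - real (Suc n) / (2 * (s + 1))) * D (s + 1) (Suc n) y" .
  moreover have "(1 - y\<^sup>2) * D s (Suc n) y = poly (rodrigues_poly s (Suc n)) y * (1 - y\<^sup>2) powr (s - real n)"
    using pos by (simp add: D_def powr_mult_base del: rodrigues_poly.simps)
  ultimately have "(poly (rodrigues_poly s (Suc n)) y - real (Suc n) * y * poly (rodrigues_poly s n) y)
        * (1 - y\<^sup>2) powr (s - real n)
      = (1 - real (Suc n) / (2 * (s + 1))) * poly (rodrigues_poly (s + 1) (Suc n)) y * (1 - y\<^sup>2) powr (s - real n)"
    by (simp add: D_def algebra_simps del: rodrigues_poly.simps)
  then show ?thesis
    using pos by (simp del: rodrigues_poly.simps)
qed

definition gegenbauer_poly :: "real \<Rightarrow> nat \<Rightarrow> real poly" where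
  "gegenbauer_poly \<nu> n = rodrigues_poly (real n + \<nu> - 1/2) n"

lemma gegenbauer_eq_poly:
  assumes "y \<in> {-1<..<1}"
  shows "gegenbauer \<nu> n y = gegenbauer_alpha \<nu> n * (-1) ^ n * poly (gegenbauer_poly \<nu> n) y"
proof -
  have pos: "1 - y\<^sup>2 > 0" using assms by (rule one_minus_sq_pos)
  have "(deriv ^^ n) (\<lambda>t. (1 - t\<^sup>2) powr (real n + \<nu> - 1/2)) y
      = poly (gegenbauer_poly \<nu> n) y * (1 - y\<^sup>2) powr (\<nu> - 1/2)"
    using higher_derivs_on_funpow_deriv[OF _ higher_derivs_on_one_minus_sq_powr assms]
    by (simp add: gegenbauer_poly_def)
  moreover have "(1 - y\<^sup>2) powr (1/2 - \<nu>) * (1 - y\<^sup>2) powr (\<nu> - 1/2) = 1"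
    using pos by (simp flip: powr_add)
  ultimately show ?thesis
    unfolding gegenbauer_def by (simp add: ac_simps)
qed

definition gegenbauer_raise_coeff :: "real \<Rightarrow> nat \<Rightarrow> real" where
  "gegenbauer_raise_coeff \<nu> n = (2 * \<nu> + real n) / (2 * real n + 2 * \<nu> + 1)"

lemma gegenbauer_poly_raise:
  assumes \<nu>: "\<nu> > -1/2" and y: "y \<in> {-1<..<1}"
  shows "(1 - y\<^sup>2) * poly (pderiv (gegenbauer_poly \<nu> n)) y - (2 * \<nu> + real n) * y * poly (gegenbauer_poly \<nu> n) y
       = gegenbauer_raise_coeff \<nu> n * poly (gegenbauer_poly \<nu> (Suc n)) y"
proof -
  define s where "s = real n + \<nu> - 1/2"
  have "s \<noteq> -1" using \<nu> by (simp add: s_def)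
  from rodrigues_poly_shift[OF this y, of n]
  have shift: "(1 - y\<^sup>2) * poly (pderiv (gegenbauer_poly \<nu> n)) y - 2 * (s - real n) * y * poly (gegenbauer_poly \<nu> n) y
      - real (Suc n) * y * poly (gegenbauer_poly \<nu> n) y
      = (1 - real (Suc n) / (2 * (s + 1))) * poly (gegenbauer_poly \<nu> (Suc n)) y"
    by (simp add: gegenbauer_poly_def s_def power2_eq_square algebra_simps)
  have coeff: "1 - real (Suc n) / (2 * (s + 1)) = gegenbauer_raise_coeff \<nu> n"
    using \<nu> by (simp add: gegenbauer_raise_coeff_def s_def field_simps)
  show ?thesis
    using shift unfolding coeff by (simp add: s_def algebra_simps)
qed

section \<open>Relativistic Hermite polynomials in the variable \<open>y\<close>\<close>

definition rel_to_geg :: "real \<Rightarrow> real \<Rightarrow> real" where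
  "rel_to_geg N x = (x / sqrt N) / sqrt (1 + x\<^sup>2 / N)"

definition rel_to_geg_deriv :: "real \<Rightarrow> real \<Rightarrow> real" where
  "rel_to_geg_deriv N x = 1 / (sqrt N * (1 + x\<^sup>2 / N) * sqrt (1 + x\<^sup>2 / N))"

lemma one_plus_sq_div_pos: "N > 0 \<Longrightarrow> 0 < 1 + x\<^sup>2 / (N::real)"
  by (simp add: add_pos_nonneg)

lemma rel_to_geg_has_real_derivative:
  assumes N: "N > 0"
  shows "(rel_to_geg N has_real_derivative rel_to_geg_deriv N x) (at x)"
proof -
  define P where "P = 1 + x\<^sup>2 / N"
  have P: "P > 0"
    using one_plus_sq_div_pos[OF N] by (simp add: P_def)
  have deriv: "(rel_to_geg N has_real_derivative
      (sqrt N * sqrt P - x * (inverse (sqrt P) * x * sqrt N) / N) / (sqrt N * sqrt P * (sqrt N * sqrt P))) (at x)"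
    unfolding rel_to_geg_def P_def using P N
    by (auto intro!: derivative_eq_intros simp: P_def[symmetric])
  have x_sq: "x * (inverse (sqrt P) * x * sqrt N) / N = sqrt N * (P - 1) / sqrt P"
    using N unfolding P_def by (simp add: field_simps power2_eq_square)
  have "(sqrt N * sqrt P - x * (inverse (sqrt P) * x * sqrt N) / N) / (sqrt N * sqrt P * (sqrt N * sqrt P))
      = rel_to_geg_deriv N x"
    unfolding x_sq rel_to_geg_deriv_def P_def[symmetric] using P N by (simp add: field_simps)
  with deriv show ?thesis by simp
qed

lemma rel_to_geg_deriv_pos: "N > 0 \<Longrightarrow> 0 < rel_to_geg_deriv N x"
  unfolding rel_to_geg_deriv_def using one_plus_sq_div_pos[of N x] by simp

lemma continuous_on_rel_to_geg_deriv: "N > 0 \<Longrightarrow> continuous_on UNIV (rel_to_geg_deriv N)"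
  unfolding rel_to_geg_deriv_def using one_plus_sq_div_pos[of N]
  by (intro continuous_intros) (auto simp: less_imp_neq[symmetric])

lemma one_minus_rel_to_geg_sq:
  assumes N: "N > 0"
  shows "1 - (rel_to_geg N x)\<^sup>2 = 1 / (1 + x\<^sup>2 / N)"
proof -
  define P where "P = 1 + x\<^sup>2 / N"
  have "P > 0" using one_plus_sq_div_pos[OF N] by (simp add: P_def)
  moreover have "(rel_to_geg N x)\<^sup>2 = (P - 1) / P"
    unfolding rel_to_geg_def P_def using N by (simp add: power_divide power_mult_distrib)
  ultimately show ?thesis
    unfolding P_def[symmetric] by (simp add: diff_divide_eq_iff)
qed

lemma range_rel_to_geg:
  assumes N: "N > 0"
  shows "range (rel_to_geg N) = {-1<..<1}"
proof (intro equalityI subsetI)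
  fix y assume "y \<in> range (rel_to_geg N)"
  then obtain x where "y = rel_to_geg N x" by blast
  then have "1 - y\<^sup>2 > 0"
    using one_minus_rel_to_geg_sq[OF N, of x] one_plus_sq_div_pos[OF N, of x] by simp
  then show "y \<in> {-1<..<1}"
    by (simp add: abs_square_less_1 abs_less_iff)
next
  fix y :: real assume y: "y \<in> {-1<..<1}"
  define r where "r = sqrt (1 - y\<^sup>2)"
  have r: "r > 0" "r\<^sup>2 = 1 - y\<^sup>2" using one_minus_sq_pos[OF y] by (auto simp: r_def)
  have "1 + (sqrt N * y / r)\<^sup>2 / N = 1 / r\<^sup>2"
    using N r by (simp add: power_divide field_simps)
  then have "rel_to_geg N (sqrt N * y / r) = y"
    unfolding rel_to_geg_def using N r by (simp add: real_sqrt_divide r_def)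
  then show "y \<in> range (rel_to_geg N)"
    by (metis rangeI)
qed

text \<open>With \<open>P = 1 + x^2/N\<close> and \<open>y = rel_to_geg N x\<close> one has \<open>rel_to_geg_deriv N x = P^(-3/2)/\<surd>N\<close>
  and \<open>x/\<surd>(N P) = y\<close>, so differentiating \<open>P^(-N-k/2) q\<^sub>k(y)\<close> yields \<open>P^(-N-(k+1)/2)/\<surd>N\<close> times
  the left-hand side of \<open>gegenbauer_poly_raise\<close>.\<close>

lemma rel_weight_gegenbauer_has_real_derivative:
  assumes N: "N > 0"
  shows "((\<lambda>x. (1 + x\<^sup>2 / N) powr (- N - real k / 2) * poly (gegenbauer_poly N k) (rel_to_geg N x))
    has_real_derivative gegenbauer_raise_coeff N k / sqrt N
      * (1 + x\<^sup>2 / N) powr (- N - real (Suc k) / 2) * poly (gegenbauer_poly N (Suc k)) (rel_to_geg N x)) (at x)"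
proof -
  define P where "P = 1 + x\<^sup>2 / N"
  define r where "r = - N - real k / 2"
  define y where "y = rel_to_geg N x"
  define A where "A = P powr r"
  have P: "P > 0" using one_plus_sq_div_pos[OF N] by (simp add: P_def)
  have "y \<in> {-1<..<1}"
    using range_rel_to_geg[OF N] by (auto simp: y_def)
  with gegenbauer_poly_raise[of N y k] N
  have raise: "gegenbauer_raise_coeff N k * poly (gegenbauer_poly N (Suc k)) y
      = poly (pderiv (gegenbauer_poly N k)) y / P - (2 * N + real k) * y * poly (gegenbauer_poly N k) y"
    using one_minus_rel_to_geg_sq[OF N, of x] by (simp add: y_def P_def)
  have powr: "P powr (r - 1) = A / P" "P powr (r - 1/2) = A / sqrt P"
    using P by (simp_all add: A_def powr_diff powr_half_sqrt)
  have exponent: "- N - real (Suc k) / 2 = r - 1/2"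
    by (simp add: r_def field_simps)
  have "((\<lambda>x. (1 + x\<^sup>2 / N) powr r * poly (gegenbauer_poly N k) (rel_to_geg N x)) has_real_derivative
      r * P powr (r - 1) * (2 * x / N) * poly (gegenbauer_poly N k) y
      + P powr r * (rel_to_geg_deriv N x * poly (pderiv (gegenbauer_poly N k)) y)) (at x)"
    unfolding P_def y_def using P[unfolded P_def] N
    by (auto intro!: derivative_eq_intros rel_to_geg_has_real_derivative[OF N])
  moreover have "r * P powr (r - 1) * (2 * x / N) * poly (gegenbauer_poly N k) y
      + P powr r * (rel_to_geg_deriv N x * poly (pderiv (gegenbauer_poly N k)) y)
      = A / (sqrt N * sqrt P)
        * (poly (pderiv (gegenbauer_poly N k)) y / P - (2 * N + real k) * y * poly (gegenbauer_poly N k) y)"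
  proof -
    define a b where "a = sqrt N" and "b = sqrt P"
    have ab: "a > 0" "b > 0" "N = a * a" "P = b * b"
      using N P by (simp_all add: a_def b_def)
    have "x = y * a * b"
      using N P by (simp add: y_def rel_to_geg_def P_def a_def b_def)
    moreover have "rel_to_geg_deriv N x = 1 / (a * P * b)"
      by (simp add: rel_to_geg_deriv_def P_def a_def b_def)
    ultimately show ?thesis
      unfolding powr(1) A_def[symmetric] a_def[symmetric] b_def[symmetric]
      unfolding ab(3,4) using ab(1,2) by (simp add: r_def ab(3) field_simps)
  qed
  ultimately show ?thesis
    unfolding raise[symmetric] exponent powr(2) r_def[symmetric] P_def[symmetric] y_def[symmetric] A_def[symmetric]
    by (simp add: field_simps)
qed

primrec rel_hermite_scale :: "real \<Rightarrow> nat \<Rightarrow> real" where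
  "rel_hermite_scale N 0 = 1"
| "rel_hermite_scale N (Suc k) = rel_hermite_scale N k * gegenbauer_raise_coeff N k / sqrt N"

lemma higher_derivs_on_rel_weight:
  assumes "N > 0"
  shows "higher_derivs_on (\<lambda>t. (1 + t\<^sup>2 / N) powr (- N)) UNIV
     (\<lambda>k x. rel_hermite_scale N k * (1 + x\<^sup>2 / N) powr (- N - real k / 2)
        * poly (gegenbauer_poly N k) (rel_to_geg N x))"
  unfolding higher_derivs_on_def
proof (intro conjI ballI allI)
  fix k and x :: real
  show "((\<lambda>x. rel_hermite_scale N k * (1 + x\<^sup>2 / N) powr (- N - real k / 2)
        * poly (gegenbauer_poly N k) (rel_to_geg N x)) has_real_derivative
      rel_hermite_scale N (Suc k) * (1 + x\<^sup>2 / N) powr (- N - real (Suc k) / 2)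
        * poly (gegenbauer_poly N (Suc k)) (rel_to_geg N x)) (at x)"
    using DERIV_cmult[OF rel_weight_gegenbauer_has_real_derivative[OF assms], of "rel_hermite_scale N k"]
    by (simp add: mult_ac)
qed (simp add: gegenbauer_poly_def)

lemma rel_hermite_eq_gegenbauer_poly:
  assumes N: "N > 0"
  shows "rel_hermite N n x = (-1) ^ n * rel_hermite_scale N n * (1 + x\<^sup>2 / N) powr (real n / 2)
           * poly (gegenbauer_poly N n) (rel_to_geg N x)"
proof -
  have "(1 + x\<^sup>2 / N) powr (N + real n) * (1 + x\<^sup>2 / N) powr (- N - real n / 2)
      = (1 + x\<^sup>2 / N) powr (real n / 2)"
    by (simp flip: powr_add)
  then show ?thesis
    unfolding rel_hermite_def higher_derivs_on_funpow_deriv[OF open_UNIV higher_derivs_on_rel_weight[OF N] UNIV_I]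
    by (simp add: ac_simps)
qed

lemma f_rel_eq_gegenbauer_weight:
  assumes N: "N > 0"
  shows "f_rel n N x = (rel_hermite_scale N n)\<^sup>2 * sqrt N
      * ((1 - (rel_to_geg N x)\<^sup>2) powr (N - 1/2) * (poly (gegenbauer_poly N n) (rel_to_geg N x))\<^sup>2)
      * rel_to_geg_deriv N x"
proof -
  define P where "P = 1 + x\<^sup>2 / N"
  have P: "P > 0" using one_plus_sq_div_pos[OF N] by (simp add: P_def)
  have weights: "P powr (- (N + 1 + real n)) * P powr real n = (1 / P) powr (N - 1/2) / (P * sqrt P)"
  proof -
    have "P * sqrt P = P powr (3/2)"
      using P by (simp add: powr_mult_base flip: powr_half_sqrt)
    moreover have "(1 / P) powr (N - 1/2) = P powr (- (N - 1/2))"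
      using P by (simp add: powr_divide flip: powr_minus_divide)
    ultimately show ?thesis
      by (simp add: algebra_simps flip: powr_add powr_diff)
  qed
  have half: "(P powr (real n / 2))\<^sup>2 = P powr real n"
    by (simp add: power2_eq_square flip: powr_add)
  have "f_rel n N x = (rel_hermite_scale N n)\<^sup>2 * (P powr (- (N + 1 + real n)) * P powr real n)
      * (poly (gegenbauer_poly N n) (rel_to_geg N x))\<^sup>2"
    unfolding f_rel_def rel_hermite_eq_gegenbauer_poly[OF N] P_def[symmetric]
    by (simp add: power_mult_distrib half flip: power_mult)
  also have "\<dots> = (rel_hermite_scale N n)\<^sup>2 * sqrt N
      * ((1 - (rel_to_geg N x)\<^sup>2) powr (N - 1/2) * (poly (gegenbauer_poly N n) (rel_to_geg N x))\<^sup>2)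
      * rel_to_geg_deriv N x"
    unfolding weights one_minus_rel_to_geg_sq[OF N] rel_to_geg_deriv_def P_def[symmetric]
    using N by (simp add: field_simps)
  finally show ?thesis .
qed

lemma g_geg_eq_gegenbauer_weight:
  assumes "y \<in> {-1<..<1}"
  shows "g_geg n \<nu> y = (gegenbauer_alpha \<nu> n)\<^sup>2 * ((1 - y\<^sup>2) powr (\<nu> - 1/2) * (poly (gegenbauer_poly \<nu> n) y)\<^sup>2)"
  unfolding g_geg_def gegenbauer_eq_poly[OF assms] by (simp add: power_mult_distrib flip: power_mult)

lemma gegenbauer_alpha_pos: "\<nu> > 0 \<Longrightarrow> 0 < gegenbauer_alpha \<nu> n"
  unfolding gegenbauer_alpha_def by (intro divide_pos_pos mult_pos_pos pochhammer_pos) auto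

lemma rel_hermite_scale_nonzero: "N > 0 \<Longrightarrow> rel_hermite_scale N n \<noteq> 0"
  by (induction n) (auto simp: gegenbauer_raise_coeff_def add_pos_nonneg)

theorem theorem4:
  fixes M :: "'a measure" and X :: "'a \<Rightarrow> real" and N :: real and n :: nat and c :: real
  assumes "prob_space M" and "N > 0" and "c > 0"
    and "distributed M lborel X (\<lambda>x. ennreal (c * f_rel n N x))"
  shows "\<exists>d>0. distributed M lborel
           (\<lambda>\<omega>. (X \<omega> / sqrt N) / sqrt (1 + (X \<omega>)\<^sup>2 / N))
           (\<lambda>y. ennreal (d * indicator {-1<..<1} y * g_geg n N y))"
proof -
  have N: "N > 0" by fact
  define w where "w y = (1 - y\<^sup>2) powr (N - 1/2) * (poly (gegenbauer_poly N n) y)\<^sup>2" for y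
  define C where "C = c * (rel_hermite_scale N n)\<^sup>2 * sqrt N"
  define d where "d = C / (gegenbauer_alpha N n)\<^sup>2"
  have "(\<lambda>y. poly (gegenbauer_poly N n) y) \<in> borel_measurable borel"
    by (intro borel_measurable_continuous_onI continuous_intros)
  then have weight: "(\<lambda>y. C * w y) \<in> borel_measurable borel"
    unfolding w_def by measurable
  have "distributed M lborel (\<lambda>\<omega>. rel_to_geg N (X \<omega>))
      (\<lambda>y. ennreal (indicator (range (rel_to_geg N)) y * (C * w y)))"
    by (rule distributed_increasing_transform[OF assms(4) rel_to_geg_has_real_derivative[OF N]
          continuous_on_rel_to_geg_deriv[OF N] less_imp_le[OF rel_to_geg_deriv_pos[OF N]] weight])
       (simp add: f_rel_eq_gegenbauer_weight[OF N] C_def w_def)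
  moreover have "indicator (range (rel_to_geg N)) y * (C * w y) = d * indicator {-1<..<1} y * g_geg n N y" for y
    using gegenbauer_alpha_pos[OF N, of n]
    by (auto simp: range_rel_to_geg[OF N] g_geg_eq_gegenbauer_weight d_def w_def split: split_indicator)
  moreover have "d > 0"
    unfolding d_def C_def using assms(3) N rel_hermite_scale_nonzero[OF N, of n] gegenbauer_alpha_pos[OF N, of n]
    by (simp add: divide_pos_pos)
  ultimately show ?thesis
    unfolding rel_to_geg_def by auto
qed

end
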